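(* Let $d\ge 1$ and $a=(a_1,\dots,a_d)\in\mathbb{R}^d$. Then $a$ is a Nuij sequence if and only if the polynomial $$q_a(z):=z^d+\sum_{k=1}^d a_k (z^d)^{(k)} = z^d+\sum_{k=1}^d a_k\frac{d!}{(d-k)!}z^{d-k}$$ is hyperbolic.
   Context: A polynomial $p\in\mathbb{R}[z]$ is called hyperbolic if all its roots are real. A sequence $a=(a_1,\dots,a_d)\in\mathbb{R}^d$ is called a Nuij sequence if for every hyperbolic polynomial $p\in\mathbb{R}[z]$ of degree $d$, the polynomial $p_a(z,s):=p(z)+\sum_{k=1}^d a_k s^k p^{(k)}(z)\in\mathbb{R}[z]$ is hyperbolic for every $s\in\mathbb{R}$. Here $p^{(k)}$ denotes the $k$-th derivative with respect to $z$. *)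

theory Defs
  imports "HOL-Computational_Algebra.Polynomial" Complex_Main
begin

definition hyperbolic :: "real poly \<Rightarrow> bool" where
  "hyperbolic p \<longleftrightarrow> (\<forall>z::complex. poly (map_poly complex_of_real p) z = 0 \<longrightarrow> z \<in> \<real>)"

definition nuij_poly :: "nat \<Rightarrow> (nat \<Rightarrow> real) \<Rightarrow> real poly \<Rightarrow> real \<Rightarrow> real poly" where
  "nuij_poly d a p s = p + (\<Sum>k=1..d. smult (a k * s ^ k) ((pderiv ^^ k) p))"

definition nuij_sequence :: "nat \<Rightarrow> (nat \<Rightarrow> real) \<Rightarrow> bool" where
  "nuij_sequence d a \<longleftrightarrow>
     (\<forall>p. degree p = d \<longrightarrow> hyperbolic p \<longrightarrow> (\<forall>s::real. hyperbolic (nuij_poly d a p s)))"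

end

theory Submission
  imports Defs "HOL-Analysis.Convex" "HOL-Computational_Algebra.Fundamental_Theorem_Algebra"
begin

(*
  Necessity is the case p = z^d, s = 1. For sufficiency write L p = p + sum_k b_k p^(k), so that
  p_a(z,s) = L p with b_k = a_k s^k, and q = L (z^d) is a rescaling of q_a, hence again
  real-rooted. For z0 in the upper half-plane, (L p)(z0) equals, up to the factor (-1)^d d!, the
  apolar form sum_m (-1)^m p^(m) h^(d-m) of p and h(w) = q(z0 - w), and h has all its roots in
  the open upper half-plane. By Grace's theorem this apolar form cannot vanish when p has its
  roots in the closed lower half-plane. Grace's theorem is proved by induction on the degree:
  the apolar form is constant, and splitting off a root alpha of p turns it into the apolar form
  of the quotient and of the polar derivative of h at alpha, whose roots stay in the upper
  half-plane by Laguerre's theorem. Conjugation then excludes roots of L p in the lower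
  half-plane.
*)

section \<open>Laguerre's theorem on polar derivatives\<close>

lemma poly_pderiv_prod_linear:
  fixes z :: complex and n :: nat
  assumes "\<forall>i<n. r i \<noteq> z"
  shows "poly (pderiv (\<Prod>i<n. [:-r i, 1:])) z = poly (\<Prod>i<n. [:-r i, 1:]) z * (\<Sum>i<n. 1 / (z - r i))"
  using assms
proof (induction n)
  case (Suc n)
  define A where "A = (\<Prod>i<n. [:-r i, 1:])"
  have IH: "poly (pderiv A) z = poly A z * (\<Sum>i<n. 1 / (z - r i))"
    using Suc by (auto simp: A_def)
  have "z - r n \<noteq> 0" using Suc.prems by auto
  then have "poly (pderiv (A * [:-r n, 1:])) z = poly (A * [:-r n, 1:]) z * (\<Sum>i<Suc n. 1 / (z - r i))"
    unfolding pderiv_mult by (simp add: IH pderiv_pCons field_simps)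
  then show ?case by (simp add: A_def)
qed simp

lemma Im_inverse_weighted:
  fixes w :: complex
  assumes "w \<noteq> 0"
  shows "y * (cmod (inverse w))\<^sup>2 + Im (inverse w) = (y - Im w) / (cmod w)\<^sup>2"
proof -
  have "(cmod w)\<^sup>2 > 0" using assms by simp
  moreover have "Im (inverse w) = - Im w / (cmod w)\<^sup>2"
    by (simp add: cmod_power2)
  moreover have "(cmod (inverse w))\<^sup>2 = 1 / (cmod w)\<^sup>2"
    unfolding norm_inverse power_inverse by (simp add: inverse_eq_divide)
  ultimately show ?thesis
    by (simp only:) (simp add: field_simps)
qed

(* For y <= 0 the function v |-> y |v|^2 + Im v is concave and vanishes at 0, so its positive
   region is closed under averaging and under shrinking towards 0. *)
lemma weighted_Im_mean_pos:
  fixes v :: "nat \<Rightarrow> complex" and y :: real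
  assumes "0 < e" "e \<le> N" "y \<le> 0" and pos: "\<forall>i<e. y * (cmod (v i))\<^sup>2 + Im (v i) > 0"
  defines "u \<equiv> (\<Sum>i<e. v i) / of_nat N"
  shows "y * (cmod u)\<^sup>2 + Im u > 0"
proof -
  define Q where "Q = (\<Sum>i<e. (cmod (v i))\<^sup>2)"
  have N: "real N > 0" using assms by simp
  have "0 < (\<Sum>i<e. y * (cmod (v i))\<^sup>2 + Im (v i))"
    using pos \<open>0 < e\<close> by (intro sum_pos) auto
  also have "\<dots> = y * Q + Im (\<Sum>i<e. v i)"
    by (simp add: Q_def sum.distrib sum_distrib_left)
  finally have sum_pos: "0 < y * Q + Im (\<Sum>i<e. v i)" .
  have "(cmod (\<Sum>i<e. v i))\<^sup>2 \<le> (\<Sum>i<e. cmod (v i))\<^sup>2"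
    by (intro power_mono norm_sum) simp
  also have "\<dots> \<le> Q * real e"
    using sum_squared_le_sum_of_squares[of "\<lambda>i. cmod (v i)" "{..<e}"] by (simp add: Q_def)
  also have "\<dots> \<le> Q * real N"
    using \<open>e \<le> N\<close> by (intro mult_left_mono) (auto simp: Q_def intro: sum_nonneg)
  finally have "(cmod (\<Sum>i<e. v i))\<^sup>2 \<le> Q * real N" .
  then have "y * (Q * real N) \<le> y * (cmod (\<Sum>i<e. v i))\<^sup>2"
    using \<open>y \<le> 0\<close> by (rule mult_left_mono_neg)
  then have "y * Q \<le> y * (cmod (\<Sum>i<e. v i))\<^sup>2 / real N"
    using N by (simp add: field_simps)
  with sum_pos have "0 < (y * (cmod (\<Sum>i<e. v i))\<^sup>2 / real N + Im (\<Sum>i<e. v i)) / real N"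
    using N by simp
  also have "\<dots> = y * (cmod u)\<^sup>2 + Im u"
    using N by (simp add: u_def norm_divide field_simps power2_eq_square)
  finally show ?thesis .
qed

definition polar_pderiv :: "nat \<Rightarrow> 'a \<Rightarrow> 'a::idom poly \<Rightarrow> 'a poly" where
  "polar_pderiv n \<alpha> h = smult (of_nat n) h - [:-\<alpha>, 1:] * pderiv h"

lemma Laguerre_polar_pderiv_nonzero:
  fixes h :: "complex poly"
  assumes "h \<noteq> 0" "degree h \<le> N" "N \<ge> 1" and roots: "\<forall>w. poly h w = 0 \<longrightarrow> Im w > 0"
    and "Im \<alpha> \<le> 0" "Im z \<le> 0"
  shows "poly (polar_pderiv N \<alpha> h) z \<noteq> 0"
proof
  assume zero: "poly (polar_pderiv N \<alpha> h) z = 0"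
  obtain r where h_eq: "smult (lead_coeff h) (\<Prod>i<degree h. [:-r i, 1:]) = h"
    using complex_poly_decompose' by blast
  define e where "e = degree h"
  have Im_r: "Im (r i) > 0" if "i < e" for i
  proof -
    have "poly h (r i) = 0"
      using that by (subst h_eq[symmetric]) (auto simp: e_def poly_prod intro: prod_zero)
    with roots show ?thesis by blast
  qed
  then have r_ne_z: "\<forall>i<e. r i \<noteq> z" using \<open>Im z \<le> 0\<close> by force
  have "poly h z \<noteq> 0" using roots \<open>Im z \<le> 0\<close> by force
  define S where "S = (\<Sum>i<e. 1 / (z - r i))"
  have "poly (pderiv h) z = poly h z * S"
    using poly_pderiv_prod_linear[OF r_ne_z]
    by (subst (1 2) h_eq[symmetric]) (simp add: pderiv_smult S_def e_def)
  with zero have "(of_nat N - (z - \<alpha>) * S) * poly h z = 0"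
    by (simp add: polar_pderiv_def algebra_simps)
  with \<open>poly h z \<noteq> 0\<close> have N_eq: "of_nat N = (z - \<alpha>) * S"
    by simp
  then have "z \<noteq> \<alpha>" using \<open>N \<ge> 1\<close> by auto
  have "e \<noteq> 0"
  proof
    assume "e = 0"
    then have "S = 0" by (simp add: S_def)
    with N_eq \<open>N \<ge> 1\<close> show False by simp
  qed
  have "0 < Im z * (cmod (inverse (z - \<alpha>)))\<^sup>2 + Im (inverse (z - \<alpha>))"
  proof -
    have pos: "\<forall>i<e. Im z * (cmod (inverse (z - r i)))\<^sup>2 + Im (inverse (z - r i)) > 0"
    proof (intro allI impI)
      fix i assume "i < e"
      then have "z - r i \<noteq> 0" using r_ne_z by force
      then show "Im z * (cmod (inverse (z - r i)))\<^sup>2 + Im (inverse (z - r i)) > 0"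
        unfolding Im_inverse_weighted[OF \<open>z - r i \<noteq> 0\<close>]
        using Im_r[OF \<open>i < e\<close>] by simp
    qed
    have "inverse (z - \<alpha>) = (\<Sum>i<e. inverse (z - r i)) / of_nat N"
      using N_eq \<open>z \<noteq> \<alpha>\<close> \<open>N \<ge> 1\<close> by (simp add: S_def field_simps)
    moreover have "0 < Im z * (cmod ((\<Sum>i<e. inverse (z - r i)) / of_nat N))\<^sup>2
        + Im ((\<Sum>i<e. inverse (z - r i)) / of_nat N)"
      by (rule weighted_Im_mean_pos[OF _ _ _ pos])
        (use \<open>e \<noteq> 0\<close> \<open>Im z \<le> 0\<close> \<open>degree h \<le> N\<close> in \<open>auto simp: e_def\<close>)
    ultimately show ?thesis by (simp only:)
  qed
  also have "\<dots> \<le> 0"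
    using \<open>z \<noteq> \<alpha>\<close> \<open>Im \<alpha> \<le> 0\<close>
    by (subst Im_inverse_weighted) (auto intro: divide_nonpos_nonneg)
  finally show False by simp
qed

section \<open>Grace's apolarity theorem\<close>

lemma higher_pderiv_diff: "(pderiv ^^ k) (p - q) = (pderiv ^^ k) p - (pderiv ^^ k) (q :: 'a::idom poly)"
  by (induction k) (simp_all add: pderiv_diff)

lemma degree_polar_pderiv:
  fixes h :: "'a::idom poly"
  assumes "degree h \<le> Suc n"
  shows "degree (polar_pderiv (Suc n) \<alpha> h) \<le> n"
proof (rule degree_le, intro allI impI)
  fix i assume "n < i"
  have pderiv_i: "coeff (pderiv h) i = 0"
    using assms \<open>n < i\<close> by (simp add: coeff_pderiv coeff_eq_0)
  have "coeff (polar_pderiv (Suc n) \<alpha> h) i = (of_nat (Suc n) - of_nat i) * coeff h i"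
    using \<open>n < i\<close> pderiv_i
    by (cases i) (auto simp: polar_pderiv_def coeff_pCons coeff_pderiv algebra_simps)
  also have "\<dots> = 0"
    using assms \<open>n < i\<close> by (cases "i = Suc n") (auto intro: coeff_eq_0)
  finally show "coeff (polar_pderiv (Suc n) \<alpha> h) i = 0" .
qed

lemma higher_pderiv_mult_linear:
  fixes f L :: "'a::idom poly"
  assumes L: "pderiv L = 1"
  shows "(pderiv ^^ Suc k) (L * f) = L * (pderiv ^^ Suc k) f + smult (of_nat (Suc k)) ((pderiv ^^ k) f)"
proof (induction k)
  case (Suc k)
  have "(pderiv ^^ Suc (Suc k)) (L * f) = pderiv ((pderiv ^^ Suc k) (L * f))"
    by simp
  also have "\<dots> = L * (pderiv ^^ Suc (Suc k)) f + (pderiv ^^ Suc k) f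
      + smult (of_nat (Suc k)) ((pderiv ^^ Suc k) f)"
    unfolding Suc by (simp add: pderiv_mult pderiv_add pderiv_smult L)
  also have "\<dots> = L * (pderiv ^^ Suc (Suc k)) f + smult (of_nat (Suc (Suc k))) ((pderiv ^^ Suc k) f)"
    by (simp only: of_nat_Suc[of "Suc k"] smult_add_left add.assoc) simp
  finally show ?case .
qed (simp add: pderiv_mult L)

lemma poly_higher_pderiv_mult_linear:
  fixes f L :: "'a::idom poly"
  assumes "pderiv L = 1" "poly L \<alpha> = 0"
  shows "poly ((pderiv ^^ k) (L * f)) \<alpha> = of_nat k * poly ((pderiv ^^ (k - 1)) f) \<alpha>"
  using assms by (cases k) (simp_all only: higher_pderiv_mult_linear, simp_all)

lemma poly_higher_pderiv_polar_pderiv: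
  fixes h :: "'a::idom poly"
  shows "poly ((pderiv ^^ j) (polar_pderiv n \<alpha> h)) \<alpha>
    = (of_nat n - of_nat j) * poly ((pderiv ^^ j) h) \<alpha>"
proof -
  have "(pderiv ^^ (j - 1)) (pderiv h) = (pderiv ^^ j) h" if "j > 0"
    using that by (cases j) (simp_all del: funpow.simps add: funpow_Suc_right)
  then have lin:
    "poly ((pderiv ^^ j) ([:-\<alpha>, 1:] * pderiv h)) \<alpha> = of_nat j * poly ((pderiv ^^ j) h) \<alpha>"
    using poly_higher_pderiv_mult_linear[of "[:-\<alpha>, 1:]" \<alpha> j "pderiv h"]
    by (cases "j = 0") (simp_all add: pderiv_pCons)
  have "poly ((pderiv ^^ j) (polar_pderiv n \<alpha> h)) \<alpha>
      = of_nat n * poly ((pderiv ^^ j) h) \<alpha> - poly ((pderiv ^^ j) ([:-\<alpha>, 1:] * pderiv h)) \<alpha>"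
    by (simp only: polar_pderiv_def higher_pderiv_diff higher_pderiv_smult poly_diff poly_smult)
  also have "\<dots> = (of_nat n - of_nat j) * poly ((pderiv ^^ j) h) \<alpha>"
    unfolding lin by (simp add: algebra_simps)
  finally show ?thesis .
qed

definition apolar :: "nat \<Rightarrow> 'a::idom poly \<Rightarrow> 'a poly \<Rightarrow> 'a poly" where
  "apolar n p h = (\<Sum>m\<le>n. smult ((-1) ^ m) ((pderiv ^^ m) p * (pderiv ^^ (n - m)) h))"

lemma pderiv_apolar:
  "pderiv (apolar n p h) = p * (pderiv ^^ Suc n) h - smult ((-1) ^ Suc n) ((pderiv ^^ Suc n) p * h)"
proof -
  define T where "T m = smult ((-1) ^ m) ((pderiv ^^ m) p * (pderiv ^^ (Suc n - m)) h)" for m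
  have "pderiv (apolar n p h)
      = (\<Sum>m\<le>n. pderiv (smult ((-1) ^ m) ((pderiv ^^ m) p * (pderiv ^^ (n - m)) h)))"
    unfolding apolar_def using higher_pderiv_sum[of 1] by simp
  also have "\<dots> = (\<Sum>m<Suc n. T m - T (Suc m))"
  proof (rule sum.cong)
    fix m assume "m \<in> {..<Suc n}"
    then have "Suc n - m = Suc (n - m)" "Suc n - Suc m = n - m" by auto
    then show "pderiv (smult ((-1) ^ m) ((pderiv ^^ m) p * (pderiv ^^ (n - m)) h))
        = T m - T (Suc m)"
      unfolding T_def by (simp add: pderiv_smult pderiv_mult algebra_simps smult_add_right)
  qed (simp add: lessThan_Suc_atMost)
  also have "\<dots> = T 0 - T (Suc n)" by (rule sum_lessThan_telescope')
  finally show ?thesis by (simp add: T_def)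
qed

lemma higher_pderiv_eq_0: "degree p < k \<Longrightarrow> (pderiv ^^ k) p = 0"
  by (rule poly_eqI) (simp add: coeff_higher_pderiv coeff_eq_0)

lemma poly_apolar_const:
  fixes p h :: "'a::{idom,ring_char_0} poly"
  assumes "degree p \<le> n" "degree h \<le> n"
  shows "poly (apolar n p h) x = poly (apolar n p h) y"
proof -
  have "(pderiv ^^ Suc n) p = 0" "(pderiv ^^ Suc n) h = 0"
    using assms by (intro higher_pderiv_eq_0; simp)+
  then have "degree (apolar n p h) = 0"
    by (simp add: pderiv_apolar flip: pderiv_eq_0_iff)
  then show ?thesis by (auto elim!: degree_eq_zeroE)
qed

lemma poly_apolar_linear_mult:
  "poly (apolar (Suc n) ([:-\<alpha>, 1:] * p) h) \<alpha> = - poly (apolar n p (polar_pderiv (Suc n) \<alpha> h)) \<alpha>"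
proof -
  have lin: "poly ((pderiv ^^ m) ([:-\<alpha>, 1:] * p)) \<alpha>
      = of_nat m * poly ((pderiv ^^ (m - 1)) p) \<alpha>" for m
    by (rule poly_higher_pderiv_mult_linear) (simp_all add: pderiv_pCons)
  have "poly (apolar (Suc n) ([:-\<alpha>, 1:] * p) h) \<alpha> =
      (\<Sum>m\<le>Suc n. (-1) ^ m * (of_nat m * poly ((pderiv ^^ (m - 1)) p) \<alpha>)
        * poly ((pderiv ^^ (Suc n - m)) h) \<alpha>)"
    by (simp only: apolar_def poly_sum poly_smult poly_mult lin mult.assoc)
  also have "\<dots> = (\<Sum>i\<le>n. (-1) ^ Suc i * (of_nat (Suc i) * poly ((pderiv ^^ i) p) \<alpha>)
      * poly ((pderiv ^^ (n - i)) h) \<alpha>)"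
    by (subst sum.atMost_Suc_shift) simp
  also have "\<dots> = - (\<Sum>i\<le>n. (-1) ^ i * poly ((pderiv ^^ i) p) \<alpha>
      * ((of_nat (Suc n) - of_nat (n - i)) * poly ((pderiv ^^ (n - i)) h) \<alpha>))"
    unfolding sum_negf[symmetric] by (intro sum.cong) auto
  also have "\<dots> = - poly (apolar n p (polar_pderiv (Suc n) \<alpha> h)) \<alpha>"
    by (simp only: apolar_def poly_sum poly_smult poly_mult poly_higher_pderiv_polar_pderiv mult.assoc)
  finally show ?thesis .
qed

theorem Grace_apolar_nonzero:
  fixes p h :: "complex poly"
  assumes "degree p = n" "p \<noteq> 0" "h \<noteq> 0" "degree h \<le> n"
    and "\<forall>w. poly p w = 0 \<longrightarrow> Im w \<le> 0" "\<forall>w. poly h w = 0 \<longrightarrow> Im w > 0"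
  shows "poly (apolar n p h) x \<noteq> 0"
  using assms
proof (induction n arbitrary: p h x)
  case 0
  then have "poly p x \<noteq> 0" "poly h x \<noteq> 0"
    by (auto elim!: degree_eq_zeroE)
  then show ?case by (simp add: apolar_def)
next
  case (Suc n)
  have "\<not> constant (poly p)" using Suc.prems(1) by (simp add: constant_degree)
  then obtain \<alpha> where "poly p \<alpha> = 0" using fundamental_theorem_of_algebra by blast
  then have "Im \<alpha> \<le> 0" using Suc.prems(5) by blast
  obtain p1 where p_eq: "p = [:-\<alpha>, 1:] * p1"
    using \<open>poly p \<alpha> = 0\<close> by (metis poly_eq_0_iff_dvd dvdE)
  have "p1 \<noteq> 0" using p_eq Suc.prems(2) by auto
  have "degree p1 = n"
    using Suc.prems(1) \<open>p1 \<noteq> 0\<close> unfolding p_eq by (subst (asm) degree_mult_eq) auto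
  have "\<forall>w. poly p1 w = 0 \<longrightarrow> Im w \<le> 0" using Suc.prems(5) p_eq by auto
  define h1 where "h1 = polar_pderiv (Suc n) \<alpha> h"
  have h1_roots: "poly h1 z \<noteq> 0" if "Im z \<le> 0" for z
    unfolding h1_def
    using Laguerre_polar_pderiv_nonzero[OF Suc.prems(3,4) _ Suc.prems(6) \<open>Im \<alpha> \<le> 0\<close> that]
    by simp
  have "h1 \<noteq> 0" using h1_roots[of 0] by auto
  moreover have "degree h1 \<le> n" unfolding h1_def using Suc.prems(4) by (rule degree_polar_pderiv)
  moreover have "\<forall>w. poly h1 w = 0 \<longrightarrow> Im w > 0" using h1_roots by force
  ultimately have "poly (apolar n p1 h1) \<alpha> \<noteq> 0"
    using Suc.IH \<open>p1 \<noteq> 0\<close> \<open>degree p1 = n\<close> \<open>\<forall>w. poly p1 w = 0 \<longrightarrow> Im w \<le> 0\<close> by blast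
  then have "poly (apolar (Suc n) p h) \<alpha> \<noteq> 0"
    unfolding p_eq h1_def poly_apolar_linear_mult by simp
  moreover have "poly (apolar (Suc n) p h) x = poly (apolar (Suc n) p h) \<alpha>"
    using Suc.prems(1,4) by (intro poly_apolar_const) auto
  ultimately show ?case by simp
qed

section \<open>Linear combinations of higher derivatives\<close>

definition pderiv_combination :: "nat \<Rightarrow> (nat \<Rightarrow> 'a) \<Rightarrow> 'a::idom poly \<Rightarrow> 'a poly" where
  "pderiv_combination d b p = p + (\<Sum>k=1..d. smult (b k) ((pderiv ^^ k) p))"

lemma degree_pderiv_combination_le:
  fixes p :: "'a::{idom,ring_char_0} poly"
  shows "degree (pderiv_combination d b p) \<le> degree p"
  unfolding pderiv_combination_def
  by (intro degree_add_le degree_sum_le order.trans[OF degree_smult_le]) (auto simp: degree_higher_pderiv)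

lemma higher_pderiv_monom_one:
  "(pderiv ^^ k) (monom (1::'a::idom) d) = monom (of_nat (\<Prod>i<k. d - i)) (d - k)"
  by (induction k) (simp_all add: pderiv_monom mult.commute diff_Suc)

lemma poly_higher_pderiv_monom_one_0:
  "poly ((pderiv ^^ j) (monom (1::'a::{idom,ring_char_0}) d)) 0 = (if j = d then fact d else 0)"
  by (simp add: poly_0_coeff_0 coeff_higher_pderiv pochhammer_fact)

lemma poly_higher_pderiv_combination_monom_0:
  fixes b :: "nat \<Rightarrow> 'a::{idom,ring_char_0}"
  assumes "j \<le> d"
  shows "poly ((pderiv ^^ j) (pderiv_combination d b (monom 1 d))) 0
    = fact d * (if j = d then 1 else b (d - j))"
proof -
  have "poly ((pderiv ^^ j) (pderiv_combination d b (monom 1 d))) 0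
     = poly ((pderiv ^^ j) (monom 1 d)) 0 + (\<Sum>k=1..d. b k * poly ((pderiv ^^ (j + k)) (monom 1 d)) 0)"
    by (simp add: pderiv_combination_def higher_pderiv_add higher_pderiv_sum higher_pderiv_smult
        poly_sum funpow_add)
  also have "\<dots> = (if j = d then fact d else 0) + (\<Sum>k=1..d. if k = d - j then b k * fact d else 0)"
    unfolding poly_higher_pderiv_monom_one_0 using assms by (intro arg_cong2[where f="(+)"] sum.cong) auto
  also have "\<dots> = fact d * (if j = d then 1 else b (d - j))"
    using assms by (cases "j = d") (auto simp: mult.commute)
  finally show ?thesis .
qed

lemma higher_pderiv_pcompose_reflect:
  "(pderiv ^^ j) (pcompose q [:z, -1:]) = smult ((-1) ^ j) (pcompose ((pderiv ^^ j) q) [:z, -1:])"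
  for q :: "'a::idom poly"
  by (induction j) (simp_all add: pderiv_smult pderiv_pcompose pderiv_pCons)

lemma poly_apolar_reflect_pderiv_combination:
  fixes p :: "'a::{idom,ring_char_0} poly" and b :: "nat \<Rightarrow> 'a" and d :: nat
  defines "q \<equiv> pderiv_combination d b (monom 1 d)"
  shows "poly (apolar d p (pcompose q [:z, -1:])) z
    = (-1) ^ d * fact d * poly (pderiv_combination d b p) z"
proof -
  have "poly (apolar d p (pcompose q [:z, -1:])) z
      = (\<Sum>m\<le>d. (-1) ^ m * poly ((pderiv ^^ m) p) z
          * ((-1) ^ (d - m) * poly ((pderiv ^^ (d - m)) q) 0))"
    unfolding apolar_def by (simp add: poly_sum higher_pderiv_pcompose_reflect poly_pcompose mult_ac)
  also have "\<dots>
      = (\<Sum>m\<le>d. (-1) ^ d * fact d * ((if m = 0 then 1 else b m) * poly ((pderiv ^^ m) p) z))"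
  proof (rule sum.cong)
    fix m assume m: "m \<in> {..d}"
    then have "(-1::'a) ^ m * (-1) ^ (d - m) = (-1) ^ d" by (simp flip: power_add)
    with m show "(-1) ^ m * poly ((pderiv ^^ m) p) z
        * ((-1) ^ (d - m) * poly ((pderiv ^^ (d - m)) q) 0)
      = (-1) ^ d * fact d * ((if m = 0 then 1 else b m) * poly ((pderiv ^^ m) p) z)"
      unfolding q_def poly_higher_pderiv_combination_monom_0[OF diff_le_self]
      by (auto simp: algebra_simps)
  qed simp
  also have "\<dots> = (-1) ^ d * fact d * (poly p z + (\<Sum>m=1..d. b m * poly ((pderiv ^^ m) p) z))"
    by (simp add: sum_distrib_left distrib_left atMost_atLeast0 sum.atLeast_Suc_atMost
        flip: One_nat_def)
  also have "\<dots> = (-1) ^ d * fact d * poly (pderiv_combination d b p) z"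
    by (simp add: pderiv_combination_def poly_sum)
  finally show ?thesis .
qed

lemma pderiv_combination_no_upper_roots:
  fixes p :: "complex poly"
  assumes "degree p = d" "p \<noteq> 0" "\<forall>w. poly p w = 0 \<longrightarrow> Im w = 0"
    and q_roots: "\<forall>w. poly (pderiv_combination d b (monom 1 d)) w = 0 \<longrightarrow> Im w = 0"
    and "Im z > 0"
  shows "poly (pderiv_combination d b p) z \<noteq> 0"
proof
  assume zero: "poly (pderiv_combination d b p) z = 0"
  define q where "q = pderiv_combination d b (monom 1 d)"
  define h where "h = pcompose q [:z, -1:]"
  have poly_h: "poly h w = poly q (z - w)" for w by (simp add: h_def poly_pcompose)
  have "poly q \<i> \<noteq> 0" using q_roots by (force simp: q_def)
  then have "h \<noteq> 0" using poly_h[of "z - \<i>"] by auto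
  have "degree q \<le> d"
    using degree_pderiv_combination_le[of d b "monom 1 d"] by (simp add: q_def degree_monom_eq)
  then have "degree h \<le> d" by (simp add: h_def degree_pcompose)
  have "\<forall>w. poly h w = 0 \<longrightarrow> Im w > 0"
    using q_roots \<open>Im z > 0\<close> by (auto simp: poly_h q_def)
  then have "poly (apolar d p h) z \<noteq> 0"
    using Grace_apolar_nonzero assms(1-3) \<open>h \<noteq> 0\<close> \<open>degree h \<le> d\<close> by simp
  moreover have "poly (apolar d p h) z = 0"
    using zero unfolding h_def q_def poly_apolar_reflect_pderiv_combination by simp
  ultimately show False by contradiction
qed

lemma map_poly_of_real_pderiv:
  "map_poly of_real (pderiv p) = pderiv (map_poly (of_real :: real \<Rightarrow> 'a::{real_algebra_1,idom}) p)"
  by (rule poly_eqI) (simp add: coeff_map_poly coeff_pderiv)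

lemma map_poly_of_real_higher_pderiv:
  "map_poly of_real ((pderiv ^^ k) p) = (pderiv ^^ k) (map_poly (of_real :: real \<Rightarrow> 'a::{real_algebra_1,idom}) p)"
  by (induction k) (simp_all add: map_poly_of_real_pderiv)

lemma map_poly_of_real_pderiv_combination:
  "map_poly of_real (pderiv_combination d b p)
    = pderiv_combination d (\<lambda>k. of_real (b k)) (map_poly (of_real :: real \<Rightarrow> 'a::{real_algebra_1,idom}) p)"
  by (rule poly_eqI)
    (simp add: pderiv_combination_def coeff_map_poly coeff_sum map_poly_of_real_higher_pderiv[symmetric])

lemma hyperbolic_iff_Im:
  "hyperbolic p \<longleftrightarrow> (\<forall>z. poly (map_poly of_real p) z = 0 \<longrightarrow> Im z = 0)"
  by (simp add: hyperbolic_def complex_is_Real_iff)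

lemma hyperbolic_iff_no_upper_roots:
  "hyperbolic p \<longleftrightarrow> (\<forall>z. Im z > 0 \<longrightarrow> poly (map_poly of_real p) z \<noteq> 0)"
proof
  assume no_upper: "\<forall>z. Im z > 0 \<longrightarrow> poly (map_poly of_real p) z \<noteq> 0"
  show "hyperbolic p"
    unfolding hyperbolic_iff_Im
  proof (intro allI impI)
    fix z :: complex assume root: "poly (map_poly of_real p) z = 0"
    then have "poly (map_poly of_real p) (cnj z) = 0"
      by (subst real_poly_cnj_root_iff) (simp_all add: coeff_map_poly)
    with root no_upper have "\<not> Im z > 0" "\<not> Im (cnj z) > 0" by blast+
    then show "Im z = 0" by simp
  qed
qed (auto simp: hyperbolic_iff_Im)

lemma hyperbolic_pderiv_combination:
  fixes p :: "real poly"
  assumes "degree p = d" "p \<noteq> 0" "hyperbolic p" "hyperbolic (pderiv_combination d b (monom 1 d))"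
  shows "hyperbolic (pderiv_combination d b p)"
proof -
  have "degree (map_poly complex_of_real p) = d" "map_poly complex_of_real p \<noteq> 0"
    using assms(1,2) by (simp_all add: degree_map_poly map_poly_eq_0_iff)
  moreover have "\<forall>w. poly (map_poly complex_of_real p) w = 0 \<longrightarrow> Im w = 0"
    using assms(3) by (simp add: hyperbolic_iff_Im)
  moreover have
    "\<forall>w. poly (pderiv_combination d (\<lambda>k. complex_of_real (b k)) (monom 1 d)) w = 0 \<longrightarrow> Im w = 0"
    using assms(4)
    by (simp add: hyperbolic_iff_Im map_poly_of_real_pderiv_combination map_poly_monom)
  ultimately show ?thesis
    unfolding hyperbolic_iff_no_upper_roots map_poly_of_real_pderiv_combination
    using pderiv_combination_no_upper_roots[of "map_poly complex_of_real p" d] by blast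
qed

lemma poly_pderiv_combination_monom_scale:
  fixes b :: "nat \<Rightarrow> 'a::{field,ring_char_0}"
  assumes "c \<noteq> 0"
  shows "poly (pderiv_combination d (\<lambda>k. b k * c ^ k) (monom 1 d)) w
    = c ^ d * poly (pderiv_combination d b (monom 1 d)) (w / c)"
proof -
  have "b k * c ^ k * (of_nat (\<Prod>i<k. d - i) * w ^ (d - k))
      = c ^ d * (b k * (of_nat (\<Prod>i<k. d - i) * (w / c) ^ (d - k)))" if "k \<in> {1..d}" for k
  proof -
    have "c ^ d = c ^ k * c ^ (d - k)" using that by (simp flip: power_add)
    then show ?thesis using assms by (simp add: power_divide)
  qed
  then show ?thesis
    unfolding pderiv_combination_def poly_add poly_sum poly_smult higher_pderiv_monom_one poly_monom
      distrib_left sum_distrib_left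
    using assms by (intro arg_cong2[where f="(+)"] sum.cong) (simp_all add: power_divide)
qed

lemma hyperbolic_pderiv_combination_monom_scale:
  assumes "hyperbolic (pderiv_combination d b (monom 1 d))"
  shows "hyperbolic (pderiv_combination d (\<lambda>k. b k * s ^ k) (monom 1 d))"
proof (cases "s = 0")
  case True
  then have "pderiv_combination d (\<lambda>k. b k * s ^ k) (monom 1 d) = monom 1 d"
    by (auto simp: pderiv_combination_def intro!: sum.neutral)
  then show ?thesis by (simp add: hyperbolic_iff_Im map_poly_monom poly_monom)
next
  case False
  show ?thesis
    unfolding hyperbolic_iff_Im
  proof (intro allI impI)
    fix w :: complex
    assume "poly (map_poly of_real (pderiv_combination d (\<lambda>k. b k * s ^ k) (monom 1 d))) w = 0"
    then have "poly (pderiv_combination d (\<lambda>k. of_real (b k) * of_real s ^ k) (monom 1 d)) w = 0"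
      by (simp add: map_poly_of_real_pderiv_combination map_poly_monom)
    then have "poly (pderiv_combination d (\<lambda>k. of_real (b k)) (monom 1 d)) (w / of_real s) = 0"
      using False by (simp add: poly_pderiv_combination_monom_scale)
    moreover have
      "\<forall>z. poly (pderiv_combination d (\<lambda>k. of_real (b k)) (monom 1 d)) z = 0 \<longrightarrow> Im z = 0"
      using assms
      by (simp add: hyperbolic_iff_Im map_poly_of_real_pderiv_combination map_poly_monom)
    ultimately have "Im (w / of_real s) = 0" by blast
    then show "Im w = 0" using False by simp
  qed
qed

theorem theoremA:
  fixes d :: nat and a :: "nat \<Rightarrow> real"
  assumes "d \<ge> 1"
  shows "nuij_sequence d a \<longleftrightarrow>
    hyperbolic (monom 1 d + (\<Sum>k=1..d. smult (a k) ((pderiv ^^ k) (monom 1 d))))"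
proof -
  have nuij_poly_eq: "nuij_poly d a p s = pderiv_combination d (\<lambda>k. a k * s ^ k) p" for p s
    by (simp add: nuij_poly_def pderiv_combination_def)
  have "nuij_sequence d a \<longleftrightarrow> hyperbolic (pderiv_combination d a (monom 1 d))"
  proof
    assume "nuij_sequence d a"
    moreover have "degree (monom (1::real) d) = d" "hyperbolic (monom 1 d)"
      by (simp_all add: degree_monom_eq hyperbolic_iff_Im map_poly_monom poly_monom)
    ultimately have "hyperbolic (nuij_poly d a (monom 1 d) 1)"
      unfolding nuij_sequence_def by blast
    then show "hyperbolic (pderiv_combination d a (monom 1 d))"
      by (simp add: nuij_poly_eq)
  next
    assume model: "hyperbolic (pderiv_combination d a (monom 1 d))"
    show "nuij_sequence d a"
      unfolding nuij_sequence_def nuij_poly_eq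
    proof (intro allI impI)
      fix p :: "real poly" and s :: real
      assume "degree p = d" "hyperbolic p"
      moreover have "p \<noteq> 0" using \<open>degree p = d\<close> \<open>d \<ge> 1\<close> by auto
      ultimately show "hyperbolic (pderiv_combination d (\<lambda>k. a k * s ^ k) p)"
        using hyperbolic_pderiv_combination hyperbolic_pderiv_combination_monom_scale[OF model]
        by blast
    qed
  qed
  then show ?thesis by (simp only: pderiv_combination_def)
qed

end
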